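(* Let $T$ be a $\pi$-increasing tree, let $V_1\subsetneq V(T)$ be a nonempty set which is a union of blocks of $\pi$, and let $v_1\in V_1$. Then $T$ can be written as $T=\mathrm{spl}(T_1,v_1;T_2,v_2)$ for some $\pi$-increasing trees $T_1$, $T_2$ with vertex-sets $V_1$ and $V_2=V(T)\setminus V_1$ respectively and some vertex $v_2\in V_2$, if and only if $V_1=\bigcup_{i\in I}\pi_i$ where $\{\pi_i: i\in I\}$ is a union of vertex-sets of connected components of $G_{v_1}(T)$. In this case, $T_1$, $T_2$ and $v_2$ are unique.
   Context: Standing assumptions: $r\ge2$ and $\pi$ is a set partition of $\{1,\dots,r\}$ having $\{1\}$ as a block; its blocks are $\pi_i$ with maxima $\mu_i$; $\pi^x$ denotes the block containing $x$. An unordered increasing tree is a rooted tree on distinct positive integers, sons unordered, each son larger than its father. A $\pi$-increasing tree is an unordered increasing tree $T$ whose vertex-set is a union of blocks of $\pi$ and such that for any two elements $i<j$ of a same block of $\pi$ contained in $V(T)$, $i$ is an ancestor of $j$ in $T$. $v$-decomposition: for a vertex $v$ of $T$ with chain $a_1<\dots<a_\ell=v$ from the root to $v$, removing the chain edges leaves components $T^{(a_j)}$ rooted at $a_j$. Splice: for unordered increasing trees $T_1,T_2$ with disjoint vertex-sets and $v_1\in V(T_1)$, $v_2\in V(T_2)$, $v_1>v_2$, $\mathrm{spl}(T_1,v_1;T_2,v_2)$ is the tree on $V(T_1)\cup V(T_2)$ obtained by merging the root-to-$v_1$ chain of $T_1$ and the root-to-$v_2$ chain of $T_2$ into one increasing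 chain (ending at $v_1$) and attaching at each chain vertex its component from the $v_1$-decomposition of $T_1$ or the $v_2$-decomposition of $T_2$. $v$-dependence graph $G_v(T)$: directed graph on the blocks of $\pi$ contained in $V(T)$; for each such block $\pi_i$ whose maximum $\mu_i$ is not on the chain $a_1,\dots,a_\ell$, $\mu_i$ is a non-root vertex of a unique $T^{(a_j)}$ and there is an edge (possibly a loop) $\pi_i\to\pi^{a_j}$; no other edges. Connected components are taken ignoring directions. *)

theory Defs
  imports Main "HOL-Library.Disjoint_Sets"
begin

text \<open>An unordered increasing tree on distinct positive integers is represented by its
vertex set and its set of edges (father, son).  Sons are unordered (edges form a set).\<close>

type_synonym tree = "nat set \<times> (nat \<times> nat) set"

definition verts :: "tree \<Rightarrow> nat set" where "verts T = fst T"
definition edges :: "tree \<Rightarrow> (nat \<times> nat) set" where "edges T = snd T"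

definition root :: "tree \<Rightarrow> nat" where "root T = Min (verts T)"

definition inc_tree :: "tree \<Rightarrow> bool" where
  "inc_tree T \<longleftrightarrow> finite (verts T) \<and> verts T \<noteq> {} \<and> 0 \<notin> verts T \<and>
     edges T \<subseteq> verts T \<times> verts T \<and>
     (\<forall>(a,b)\<in>edges T. a < b) \<and>
     (\<forall>v\<in>verts T. v \<noteq> root T \<longrightarrow> (\<exists>!u. (u,v) \<in> edges T))"

definition ancestor :: "tree \<Rightarrow> nat \<Rightarrow> nat \<Rightarrow> bool" where
  "ancestor T i j \<longleftrightarrow> (i, j) \<in> (edges T)\<^sup>+"

definition std_partition :: "nat \<Rightarrow> nat set set \<Rightarrow> bool" where
  "std_partition r P \<longleftrightarrow> r \<ge> 2 \<and> partition_on {1..r} P \<and> {1} \<in> P"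

definition union_of_blocks :: "nat set set \<Rightarrow> nat set \<Rightarrow> bool" where
  "union_of_blocks P V \<longleftrightarrow> (\<exists>Q\<subseteq>P. V = \<Union>Q)"

definition pi_inc_tree :: "nat set set \<Rightarrow> tree \<Rightarrow> bool" where
  "pi_inc_tree P T \<longleftrightarrow> inc_tree T \<and> union_of_blocks P (verts T) \<and>
     (\<forall>B\<in>P. B \<subseteq> verts T \<longrightarrow> (\<forall>i\<in>B. \<forall>j\<in>B. i < j \<longrightarrow> ancestor T i j))"

definition chain :: "tree \<Rightarrow> nat \<Rightarrow> nat set" where
  "chain T v = {a \<in> verts T. (a, v) \<in> (edges T)\<^sup>*}"

text \<open>edges remaining after removing the chain edges (the chain edges are exactly the edges
whose son lies on the chain)\<close>
definition offchain_edges :: "tree \<Rightarrow> nat \<Rightarrow> (nat \<times> nat) set" where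
  "offchain_edges T v = {(x, y) \<in> edges T. y \<notin> chain T v}"

definition decomp_comp :: "tree \<Rightarrow> nat \<Rightarrow> nat \<Rightarrow> tree" where
  "decomp_comp T v a =
     (let W = {x. (a, x) \<in> (offchain_edges T v)\<^sup>*}
      in (W, {(x, y) \<in> offchain_edges T v. x \<in> W \<and> y \<in> W}))"

definition spl :: "tree \<Rightarrow> nat \<Rightarrow> tree \<Rightarrow> nat \<Rightarrow> tree" where
  "spl T1 v1 T2 v2 =
     (let C = chain T1 v1 \<union> chain T2 v2
      in (verts T1 \<union> verts T2,
          {(a, b). a \<in> C \<and> b \<in> C \<and> a < b \<and> \<not> (\<exists>c\<in>C. a < c \<and> c < b)}
          \<union> (\<Union>a\<in>chain T1 v1. edges (decomp_comp T1 v1 a))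
          \<union> (\<Union>a\<in>chain T2 v2. edges (decomp_comp T2 v2 a))))"

definition dep_nodes :: "nat set set \<Rightarrow> tree \<Rightarrow> nat set set" where
  "dep_nodes P T = {B \<in> P. B \<subseteq> verts T}"

definition dep_edges :: "nat set set \<Rightarrow> tree \<Rightarrow> nat \<Rightarrow> (nat set \<times> nat set) set" where
  "dep_edges P T v =
     {(B, B'). B \<in> dep_nodes P T \<and> B' \<in> dep_nodes P T \<and> Max B \<notin> chain T v \<and>
        (\<exists>a\<in>chain T v. Max B \<in> verts (decomp_comp T v a) \<and> Max B \<noteq> a \<and> a \<in> B')}"

definition dep_components :: "nat set set \<Rightarrow> tree \<Rightarrow> nat \<Rightarrow> nat set set set" where
  "dep_components P T v =
     (\<lambda>B. {B' \<in> dep_nodes P T. (B, B') \<in> (dep_edges P T v \<union> (dep_edges P T v)\<inverse>)\<^sup>*})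
       ` dep_nodes P T"

end

theory Submission
  imports Defs
begin

text \<open>Splicing changes neither the merged chain to \<open>v\<^sub>1\<close> nor the components of the decomposition
  along it.  So if \<open>T = spl(T\<^sub>1, v\<^sub>1; T\<^sub>2, v\<^sub>2)\<close>, every component lies on the same side of \<open>V\<^sub>1\<close>
  as its root on the chain, and \<open>T\<^sub>1\<close>, \<open>T\<^sub>2\<close> are recovered as the chain vertices of their side
  with their components attached, \<open>v\<^sub>2\<close> being the largest chain vertex outside \<open>V\<^sub>1\<close>; this
  gives uniqueness.  Conversely, when every component lies on the side of its root, these two
  restrictions are \<open>\<pi>\<close>-increasing and splice back to \<open>T\<close>.  Finally, this condition says exactly
  that \<open>V\<^sub>1\<close> is a union of connected components of the dependence graph: by the \<open>\<pi>\<close>-increasing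
  property the maximum of the block of a vertex is a descendant of that vertex, so the block of any
  non-root vertex of the component rooted at \<open>a\<close> has an edge to the block of \<open>a\<close>.\<close>

lemma verts_pair [simp]: "verts (V, E) = V"
  by (simp add: verts_def)

lemma edges_pair [simp]: "edges (V, E) = E"
  by (simp add: edges_def)

lemma tree_eqI: "verts T = verts T' \<Longrightarrow> edges T = edges T' \<Longrightarrow> T = T'"
  by (simp add: verts_def edges_def prod_eq_iff)

section \<open>Increasing trees\<close>

lemma inc_tree_finite: "inc_tree T \<Longrightarrow> finite (verts T)"
  by (simp add: inc_tree_def)

lemma inc_tree_edgeD: "inc_tree T \<Longrightarrow> (a, b) \<in> edges T \<Longrightarrow> a \<in> verts T \<and> b \<in> verts T \<and> a < b"
  unfolding inc_tree_def by blast

lemma inc_tree_root_in: "inc_tree T \<Longrightarrow> root T \<in> verts T"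
  unfolding inc_tree_def root_def by auto

lemma inc_tree_root_le: "inc_tree T \<Longrightarrow> x \<in> verts T \<Longrightarrow> root T \<le> x"
  unfolding inc_tree_def root_def by auto

lemma inc_tree_father: "inc_tree T \<Longrightarrow> y \<in> verts T \<Longrightarrow> y \<noteq> root T \<Longrightarrow> \<exists>u. (u, y) \<in> edges T"
  unfolding inc_tree_def by blast

lemma inc_tree_father_unique:
  assumes "inc_tree T" "(u, y) \<in> edges T" "(u', y) \<in> edges T"
  shows "u = u'"
proof -
  have "y \<in> verts T" "y \<noteq> root T"
    using inc_tree_edgeD[OF assms(1,2)] inc_tree_root_le[OF assms(1)] by fastforce+
  then have "\<exists>!u. (u, y) \<in> edges T"
    using assms(1) unfolding inc_tree_def by blast
  with assms(2,3) show ?thesis by blast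
qed

lemma inc_tree_rtrancl_le:
  assumes "inc_tree T" "(a, b) \<in> (edges T)\<^sup>*" shows "a \<le> b"
  using assms(2) by (induction rule: rtrancl_induct) (auto dest: inc_tree_edgeD[OF assms(1)])

lemma inc_tree_trancl_less:
  assumes "inc_tree T" "(a, b) \<in> (edges T)\<^sup>+" shows "a < b"
  using assms(2) by (induction rule: trancl_induct) (auto dest: inc_tree_edgeD[OF assms(1)])

lemma inc_tree_trancl_verts:
  assumes "inc_tree T" "(a, b) \<in> (edges T)\<^sup>+" shows "a \<in> verts T \<and> b \<in> verts T"
  using assms(2) by (induction rule: trancl_induct) (auto dest: inc_tree_edgeD[OF assms(1)])

lemma inc_tree_rtrancl_verts:
  "inc_tree T \<Longrightarrow> (a, b) \<in> (edges T)\<^sup>* \<Longrightarrow> a \<in> verts T \<longleftrightarrow> b \<in> verts T"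
  by (metis inc_tree_trancl_verts rtranclD)

lemma inc_tree_root_rtrancl:
  assumes it: "inc_tree T" and "y \<in> verts T"
  shows "(root T, y) \<in> (edges T)\<^sup>*"
  using assms(2)
proof (induction y rule: less_induct)
  case (less y)
  show ?case
  proof (cases "y = root T")
    case False
    then obtain u where u: "(u, y) \<in> edges T" using inc_tree_father[OF it less.prems] by blast
    with inc_tree_edgeD[OF it u] less.IH show ?thesis by (meson rtrancl.rtrancl_into_rtrancl)
  qed simp
qed

lemma inc_tree_ancestors_linear:
  assumes it: "inc_tree T" and "(b, y) \<in> (edges T)\<^sup>*" "(a, y) \<in> (edges T)\<^sup>*" "a \<le> b"
  shows "(a, b) \<in> (edges T)\<^sup>*"
  using assms(2-4)
proof (induction y rule: less_induct)
  case (less y)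
  show ?case
  proof (cases "b = y")
    case False
    then obtain u where u: "(b, u) \<in> (edges T)\<^sup>*" "(u, y) \<in> edges T"
      using less.prems(1) by (metis rtranclE)
    have "a \<noteq> y"
      using False inc_tree_rtrancl_le[OF it less.prems(1)] less.prems(3) by simp
    then obtain u' where u': "(a, u') \<in> (edges T)\<^sup>*" "(u', y) \<in> edges T"
      using less.prems(2) by (metis rtranclE)
    have "u' = u" using inc_tree_father_unique[OF it u'(2) u(2)] .
    moreover have "u < y" using inc_tree_edgeD[OF it u(2)] by simp
    ultimately show ?thesis using less.IH u u' less.prems(3) by blast
  qed (use less in simp)
qed

section \<open>The chain to a vertex and the decomposition along it\<close>

lemma chain_subset_verts: "chain T v \<subseteq> verts T"
  by (auto simp: chain_def)

lemma chain_self: "v \<in> verts T \<Longrightarrow> v \<in> chain T v"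
  by (auto simp: chain_def)

lemma root_in_chain: "inc_tree T \<Longrightarrow> v \<in> verts T \<Longrightarrow> root T \<in> chain T v"
  by (auto simp: chain_def inc_tree_root_rtrancl inc_tree_root_in)

lemma chain_le: "inc_tree T \<Longrightarrow> a \<in> chain T v \<Longrightarrow> a \<le> v"
  by (auto simp: chain_def inc_tree_rtrancl_le)

lemma chain_finite: "inc_tree T \<Longrightarrow> finite (chain T v)"
  using chain_subset_verts inc_tree_finite finite_subset by blast

lemma Max_chain: "inc_tree T \<Longrightarrow> v \<in> verts T \<Longrightarrow> Max (chain T v) = v"
  by (intro Max_eqI chain_finite chain_self) (auto dest: chain_le)

lemma chain_rtrancl:
  "inc_tree T \<Longrightarrow> a \<in> chain T v \<Longrightarrow> b \<in> chain T v \<Longrightarrow> a \<le> b \<Longrightarrow> (a, b) \<in> (edges T)\<^sup>*"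
  by (auto simp: chain_def intro: inc_tree_ancestors_linear)

lemma chain_ancestor_closed:
  "inc_tree T \<Longrightarrow> (x, y) \<in> (edges T)\<^sup>* \<Longrightarrow> y \<in> chain T v \<Longrightarrow> x \<in> chain T v"
  unfolding chain_def using inc_tree_rtrancl_verts by (auto intro: rtrancl_trans)

lemma offchain_edges_subset: "offchain_edges T v \<subseteq> edges T"
  by (auto simp: offchain_edges_def)

lemma offchain_edges_rtrancl: "(a, x) \<in> (offchain_edges T v)\<^sup>* \<Longrightarrow> (a, x) \<in> (edges T)\<^sup>*"
  using offchain_edges_subset rtrancl_mono by blast

lemma offchain_edges_notin_chain: "(x, y) \<in> offchain_edges T v \<Longrightarrow> y \<notin> chain T v"
  by (auto simp: offchain_edges_def)

lemma offchain_rtrancl_notin_chain: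
  "(a, x) \<in> (offchain_edges T v)\<^sup>* \<Longrightarrow> x \<noteq> a \<Longrightarrow> x \<notin> chain T v"
  by (metis offchain_edges_notin_chain rtranclE)

lemma offchain_rtrancl_verts:
  "inc_tree T \<Longrightarrow> a \<in> verts T \<Longrightarrow> (a, x) \<in> (offchain_edges T v)\<^sup>* \<Longrightarrow> x \<in> verts T"
  using offchain_edges_rtrancl inc_tree_rtrancl_verts by blast

lemma verts_decomp_comp: "verts (decomp_comp T v a) = {x. (a, x) \<in> (offchain_edges T v)\<^sup>*}"
  by (simp add: decomp_comp_def Let_def)

lemma edges_decomp_comp: "edges (decomp_comp T v a) =
   {(x, y) \<in> offchain_edges T v. (a, x) \<in> (offchain_edges T v)\<^sup>* \<and> (a, y) \<in> (offchain_edges T v)\<^sup>*}"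
  by (simp add: decomp_comp_def Let_def)

lemma edges_decomp_comp_subset: "edges (decomp_comp T v a) \<subseteq> offchain_edges T v"
  by (auto simp: edges_decomp_comp)

lemma edges_decomp_compD:
  "(x, y) \<in> edges (decomp_comp T v a) \<Longrightarrow> (x, y) \<in> edges T \<and> y \<notin> chain T v"
  using edges_decomp_comp_subset offchain_edges_subset offchain_edges_notin_chain by blast

lemma ex_chain_root_of_component:
  assumes it: "inc_tree T" and v: "v \<in> verts T" and "x \<in> verts T"
  shows "\<exists>a\<in>chain T v. (a, x) \<in> (offchain_edges T v)\<^sup>*"
  using assms(3)
proof (induction x rule: less_induct)
  case (less x)
  show ?case
  proof (cases "x \<in> chain T v")
    case False
    then have "x \<noteq> root T" using root_in_chain[OF it v] by auto
    then obtain u where u: "(u, x) \<in> edges T" using inc_tree_father[OF it less.prems] by blast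
    then obtain a where a: "a \<in> chain T v" "(a, u) \<in> (offchain_edges T v)\<^sup>*"
      using less.IH inc_tree_edgeD[OF it u] by blast
    have "(u, x) \<in> offchain_edges T v" using u False by (simp add: offchain_edges_def)
    with a show ?thesis by (meson rtrancl.rtrancl_into_rtrancl)
  qed blast
qed

lemma descendant_offchain:
  assumes it: "inc_tree T" and "x \<notin> chain T v" "(x, y) \<in> (edges T)\<^sup>*"
  shows "(x, y) \<in> (offchain_edges T v)\<^sup>* \<and> y \<notin> chain T v"
  using assms(3)
proof (induction rule: rtrancl_induct)
  case (step y z)
  then have "z \<notin> chain T v" using chain_ancestor_closed[OF it] by (meson r_into_rtrancl)
  with step have "(y, z) \<in> offchain_edges T v" by (simp add: offchain_edges_def)
  with step \<open>z \<notin> chain T v\<close> show ?case by (meson rtrancl.rtrancl_into_rtrancl)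
qed (use assms in simp)

definition consecutive_pairs :: "nat set \<Rightarrow> (nat \<times> nat) set" where
  "consecutive_pairs K = {(a, b). a \<in> K \<and> b \<in> K \<and> a < b \<and> \<not> (\<exists>c\<in>K. a < c \<and> c < b)}"

lemma consecutive_pairsD: "(u, z) \<in> consecutive_pairs K \<Longrightarrow> u \<in> K \<and> z \<in> K \<and> u < z"
  unfolding consecutive_pairs_def by simp

lemma consecutive_pairs_unique:
  "(u, z) \<in> consecutive_pairs K \<Longrightarrow> (u', z) \<in> consecutive_pairs K \<Longrightarrow> u = u'"
  unfolding consecutive_pairs_def by (cases u u' rule: linorder_cases) auto

lemma consecutive_pairs_predecessor:
  assumes "finite K" "z \<in> K" "y \<in> K" "y < z"
  defines "p \<equiv> Max {c\<in>K. c < z}"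
  shows "p \<in> K \<and> y \<le> p \<and> (p, z) \<in> consecutive_pairs K"
proof -
  have fin: "finite {c\<in>K. c < z}" and ne: "{c\<in>K. c < z} \<noteq> {}" using assms by auto
  have "p \<in> K" "p < z" using Max_in[OF fin ne] by (auto simp: p_def)
  moreover have "c \<le> p" if "c \<in> K" "c < z" for c using Max_ge[OF fin] that by (simp add: p_def)
  ultimately show ?thesis using assms(2-4) unfolding consecutive_pairs_def by fastforce
qed

lemma spl_verts: "verts (spl T1 v1 T2 v2) = verts T1 \<union> verts T2"
  by (simp add: spl_def Let_def)

lemma spl_edges: "edges (spl T1 v1 T2 v2) = consecutive_pairs (chain T1 v1 \<union> chain T2 v2)
   \<union> (\<Union>a\<in>chain T1 v1. edges (decomp_comp T1 v1 a))
   \<union> (\<Union>a\<in>chain T2 v2. edges (decomp_comp T2 v2 a))"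
  by (simp add: spl_def Let_def consecutive_pairs_def)

lemma chain_eqI:
  assumes it: "inc_tree T" and K: "K \<subseteq> verts T" "k \<in> K" "\<forall>x\<in>K. x \<le> k" "root T \<in> K"
    "consecutive_pairs K \<subseteq> edges T"
  shows "chain T k = K"
proof -
  have fK: "finite K" using K(1) inc_tree_finite[OF it] finite_subset by blast
  have down: "(y, z) \<in> (edges T)\<^sup>*" if "z \<in> K" "y \<in> K" "y \<le> z" for y z
    using that
  proof (induction z rule: less_induct)
    case (less z)
    show ?case
    proof (cases "y = z")
      case False
      with less.prems have "y < z" by simp
      from consecutive_pairs_predecessor[OF fK less.prems(1,2) this]
      obtain p where p: "p \<in> K" "y \<le> p" "(p, z) \<in> consecutive_pairs K" by blast
      have "p < z" using consecutive_pairsD[OF p(3)] by simp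
      then have "(y, p) \<in> (edges T)\<^sup>*" using less.IH p(1,2) less.prems(2) by blast
      moreover have "(p, z) \<in> edges T" using p(3) K(5) by blast
      ultimately show ?thesis by (rule rtrancl_into_rtrancl)
    qed simp
  qed
  have up: "y \<in> K" if "z \<in> K" "(y, z) \<in> (edges T)\<^sup>*" for y z
    using that
  proof (induction z rule: less_induct)
    case (less z)
    show ?case
    proof (cases "y = z")
      case False
      then obtain u where u: "(y, u) \<in> (edges T)\<^sup>*" "(u, z) \<in> edges T"
        using less.prems(2) by (metis rtranclE)
      have uz: "u < z" "u \<in> verts T" using inc_tree_edgeD[OF it u(2)] by auto
      then have "root T < z" using inc_tree_root_le[OF it uz(2)] by simp
      from consecutive_pairs_predecessor[OF fK less.prems(1) K(4) this]
      obtain p where p: "p \<in> K" "(p, z) \<in> consecutive_pairs K" by blast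
      then have "u = p" using inc_tree_father_unique[OF it u(2)] K(5) by blast
      then show ?thesis using less.IH[OF uz(1)] u(1) p(1) by blast
    qed (use less in simp)
  qed
  show ?thesis
  proof
    show "chain T k \<subseteq> K" using up[OF K(2)] by (auto simp: chain_def)
    show "K \<subseteq> chain T k" using down[OF K(2)] K(1,3) by (auto simp: chain_def)
  qed
qed

lemma decomp_comp_eqI:
  assumes "edges (decomp_comp T v a) \<subseteq> offchain_edges T' v'"
    and "\<And>x y. (a, x) \<in> (offchain_edges T v)\<^sup>* \<Longrightarrow> (x, y) \<in> offchain_edges T' v' \<Longrightarrow>
      (x, y) \<in> offchain_edges T v"
  shows "decomp_comp T' v' a = decomp_comp T v a"
proof -
  let ?O = "offchain_edges T v" and ?O' = "offchain_edges T' v'"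
  have reach: "(a, x) \<in> ?O'\<^sup>* \<longleftrightarrow> (a, x) \<in> ?O\<^sup>*" for x
  proof
    assume "(a, x) \<in> ?O'\<^sup>*" then show "(a, x) \<in> ?O\<^sup>*"
      by (induction rule: rtrancl_induct) (auto intro: rtrancl_into_rtrancl assms(2))
  next
    assume "(a, x) \<in> ?O\<^sup>*" then show "(a, x) \<in> ?O'\<^sup>*"
    proof (induction rule: rtrancl_induct)
      case (step y z)
      then have "(y, z) \<in> edges (decomp_comp T v a)"
        by (auto simp: edges_decomp_comp intro: rtrancl_into_rtrancl)
      with step assms(1) show ?case by (auto intro: rtrancl_into_rtrancl)
    qed simp
  qed
  show ?thesis
    using reach assms by (intro tree_eqI) (auto simp: verts_decomp_comp edges_decomp_comp)
qed

lemma verts_eq_decomposition: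
  assumes it: "inc_tree T" and v: "v \<in> verts T"
  shows "verts T = (\<Union>a\<in>chain T v. verts (decomp_comp T v a))"
proof
  show "verts T \<subseteq> (\<Union>a\<in>chain T v. verts (decomp_comp T v a))"
    using ex_chain_root_of_component[OF it v] by (auto simp: verts_decomp_comp)
  show "(\<Union>a\<in>chain T v. verts (decomp_comp T v a)) \<subseteq> verts T"
    using offchain_rtrancl_verts[OF it] chain_subset_verts[of T v] by (auto simp: verts_decomp_comp)
qed

lemma consecutive_pairs_chain:
  assumes it: "inc_tree T"
  shows "consecutive_pairs (chain T v) = {(x, y) \<in> edges T. y \<in> chain T v}"
proof safe
  fix a b assume ab: "(a, b) \<in> consecutive_pairs (chain T v)"
  then have abC: "a \<in> chain T v" "b \<in> chain T v" "a < b"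
    and gap: "\<not> (\<exists>c\<in>chain T v. a < c \<and> c < b)" by (auto simp: consecutive_pairs_def)
  then obtain u where u: "(a, u) \<in> (edges T)\<^sup>*" "(u, b) \<in> edges T"
    using chain_rtrancl[OF it] by (metis less_imp_le less_irrefl rtranclE)
  have "u \<in> chain T v" using chain_ancestor_closed[OF it r_into_rtrancl[OF u(2)] abC(2)] .
  then have "u = a" using gap inc_tree_edgeD[OF it u(2)] inc_tree_rtrancl_le[OF it u(1)] by fastforce
  with u abC show "(a, b) \<in> edges T" "b \<in> chain T v" by simp_all
next
  fix x y assume e: "(x, y) \<in> edges T" and y: "y \<in> chain T v"
  then have x: "x \<in> chain T v" using chain_ancestor_closed[OF it r_into_rtrancl[OF e]] by blast
  have gap: "\<not> (c \<in> chain T v \<and> x < c \<and> c < y)" for c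
  proof
    assume c: "c \<in> chain T v \<and> x < c \<and> c < y"
    then obtain u where "(c, u) \<in> (edges T)\<^sup>*" "(u, y) \<in> edges T"
      using chain_rtrancl[OF it _ y] by (metis less_imp_le less_irrefl rtranclE)
    moreover from this have "u = x" using inc_tree_father_unique[OF it _ e] by blast
    ultimately show False using inc_tree_rtrancl_le[OF it] c by fastforce
  qed
  moreover have "x < y" using inc_tree_edgeD[OF it e] by simp
  ultimately show "(x, y) \<in> consecutive_pairs (chain T v)"
    using x y unfolding consecutive_pairs_def by blast
qed

lemma edges_eq_decomposition:
  assumes it: "inc_tree T" and v: "v \<in> verts T"
  shows "edges T = consecutive_pairs (chain T v) \<union> (\<Union>a\<in>chain T v. edges (decomp_comp T v a))"
proof -
  have off: "{(x, y) \<in> edges T. y \<notin> chain T v} \<subseteq> (\<Union>a\<in>chain T v. edges (decomp_comp T v a))"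
  proof clarify
    fix x y assume e: "(x, y) \<in> edges T" "y \<notin> chain T v"
    then have off: "(x, y) \<in> offchain_edges T v" by (simp add: offchain_edges_def)
    obtain a where a: "a \<in> chain T v" "(a, x) \<in> (offchain_edges T v)\<^sup>*"
      using ex_chain_root_of_component[OF it v] inc_tree_edgeD[OF it e(1)] by blast
    with off have "(x, y) \<in> edges (decomp_comp T v a)"
      by (simp add: edges_decomp_comp rtrancl.rtrancl_into_rtrancl)
    with a show "(x, y) \<in> (\<Union>a\<in>chain T v. edges (decomp_comp T v a))" by blast
  qed
  have comps: "(\<Union>a\<in>chain T v. edges (decomp_comp T v a)) \<subseteq> edges T"
    using edges_decomp_comp_subset offchain_edges_subset by blast
  have "edges T = {(x, y) \<in> edges T. y \<in> chain T v} \<union> {(x, y) \<in> edges T. y \<notin> chain T v}"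
    by auto
  with off comps show ?thesis
    unfolding consecutive_pairs_chain[OF it] by auto
qed

section \<open>Restricting a tree to part of a chain\<close>

text \<open>Both factors of a splice are of this form, with \<open>K\<close> the chain vertices on their side.\<close>

definition restrict_chain :: "tree \<Rightarrow> nat \<Rightarrow> nat set \<Rightarrow> tree" where
  "restrict_chain T v K = (\<Union>a\<in>K. verts (decomp_comp T v a),
     consecutive_pairs K \<union> (\<Union>a\<in>K. edges (decomp_comp T v a)))"

lemma verts_restrict_chain:
  "verts (restrict_chain T v K) = {x. \<exists>a\<in>K. (a, x) \<in> (offchain_edges T v)\<^sup>*}"
  by (auto simp: restrict_chain_def verts_decomp_comp)

lemma edges_restrict_chain:
  "edges (restrict_chain T v K) = consecutive_pairs K \<union> (\<Union>a\<in>K. edges (decomp_comp T v a))"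
  by (simp add: restrict_chain_def)

context
  fixes T :: tree and v :: nat and K :: "nat set"
  assumes it: "inc_tree T" and v: "v \<in> verts T" and K_chain: "K \<subseteq> chain T v" and K_ne: "K \<noteq> {}"
begin

abbreviation (input) R :: tree where "R \<equiv> restrict_chain T v K"

lemma restrict_chain_finite: "finite K"
  using K_chain chain_finite[OF it] finite_subset by blast

lemma restrict_chain_chain_subset_verts: "K \<subseteq> verts R"
  by (auto simp: verts_restrict_chain)

lemma verts_restrict_chain_subset: "verts R \<subseteq> verts T"
  using offchain_rtrancl_verts[OF it] K_chain chain_subset_verts[of T v]
  by (auto simp: verts_restrict_chain)

lemma verts_restrict_chain_inter_chain:
  assumes "x \<in> verts R" "x \<in> chain T v"
  shows "x \<in> K"
proof -
  obtain a where "a \<in> K" "(a, x) \<in> (offchain_edges T v)\<^sup>*"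
    using assms(1) by (auto simp: verts_restrict_chain)
  with assms(2) show ?thesis using offchain_rtrancl_notin_chain by blast
qed

lemma root_restrict_chain: "root R = Min K"
proof -
  have "Min K \<le> x" if x: "x \<in> verts R" for x
  proof -
    obtain a where a: "a \<in> K" "(a, x) \<in> (offchain_edges T v)\<^sup>*"
      using x by (auto simp: verts_restrict_chain)
    have "Min K \<le> a" using Min_le[OF restrict_chain_finite a(1)] .
    also have "a \<le> x" using inc_tree_rtrancl_le[OF it offchain_edges_rtrancl[OF a(2)]] .
    finally show ?thesis .
  qed
  moreover have "Min K \<in> verts R"
    using Min_in[OF restrict_chain_finite K_ne] restrict_chain_chain_subset_verts by blast
  moreover have "finite (verts R)"
    using verts_restrict_chain_subset inc_tree_finite[OF it] finite_subset by blast
  ultimately show ?thesis unfolding root_def by (intro Min_eqI) auto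
qed

lemma restrict_chain_father:
  assumes y: "y \<in> verts R" "y \<noteq> root R"
  shows "\<exists>!u. (u, y) \<in> edges R"
proof (cases "y \<in> K")
  case True
  have "Min K < y"
    using Min_le[OF restrict_chain_finite True] y(2) root_restrict_chain by simp
  from consecutive_pairs_predecessor[OF restrict_chain_finite True Min_in[OF restrict_chain_finite K_ne] this]
  obtain p where p: "(p, y) \<in> consecutive_pairs K" by blast
  have "(u, y) \<in> consecutive_pairs K" if u: "(u, y) \<in> edges R" for u
  proof -
    have "(u, y) \<notin> edges (decomp_comp T v a)" for a
      using edges_decomp_compD[of u y T v a] True K_chain by blast
    with u show ?thesis by (auto simp: edges_restrict_chain)
  qed
  with p show ?thesis
    unfolding edges_restrict_chain by (metis UnI1 consecutive_pairs_unique)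
next
  case False
  obtain a where a: "a \<in> K" "(a, y) \<in> (offchain_edges T v)\<^sup>*"
    using y(1) by (auto simp: verts_restrict_chain)
  with False have "y \<noteq> a" by blast
  then obtain u where u: "(a, u) \<in> (offchain_edges T v)\<^sup>*" "(u, y) \<in> offchain_edges T v"
    using a(2) by (metis rtranclE)
  then have "(u, y) \<in> edges (decomp_comp T v a)"
    using a(2) by (simp add: edges_decomp_comp)
  with a(1) have uR: "(u, y) \<in> edges R" by (auto simp: edges_restrict_chain)
  have "(u', y) \<in> edges T" if u': "(u', y) \<in> edges R" for u'
    using u' False consecutive_pairsD[of u' y K] edges_decomp_compD[of u' y T v]
    by (auto simp: edges_restrict_chain)
  with uR show ?thesis
    using inc_tree_father_unique[OF it] by blast
qed

lemma inc_tree_restrict_chain: "inc_tree R"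
  unfolding inc_tree_def
proof (intro conjI)
  show "finite (verts R)"
    using verts_restrict_chain_subset inc_tree_finite[OF it] finite_subset by blast
  show "verts R \<noteq> {}" using restrict_chain_chain_subset_verts K_ne by blast
  show "0 \<notin> verts R" using verts_restrict_chain_subset it by (auto simp: inc_tree_def)
  show "edges R \<subseteq> verts R \<times> verts R"
  proof clarify
    fix x y assume "(x, y) \<in> edges R"
    then consider "(x, y) \<in> consecutive_pairs K" | a where "a \<in> K" "(x, y) \<in> edges (decomp_comp T v a)"
      by (auto simp: edges_restrict_chain)
    then show "x \<in> verts R \<and> y \<in> verts R"
    proof cases
      case 1
      then show ?thesis using consecutive_pairsD restrict_chain_chain_subset_verts by blast
    next
      case 2
      then show ?thesis by (auto simp: edges_decomp_comp verts_restrict_chain)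
    qed
  qed
  show "\<forall>(a, b)\<in>edges R. a < b"
  proof clarify
    fix x y assume "(x, y) \<in> edges R"
    then consider "(x, y) \<in> consecutive_pairs K" | a where "(x, y) \<in> edges (decomp_comp T v a)"
      by (auto simp: edges_restrict_chain)
    then show "x < y"
      using consecutive_pairsD edges_decomp_compD[of x y T v] inc_tree_edgeD[OF it] by cases blast+
  qed
  show "\<forall>y\<in>verts R. y \<noteq> root R \<longrightarrow> (\<exists>!u. (u, y) \<in> edges R)"
    using restrict_chain_father by blast
qed

lemma chain_restrict_chain: "chain R (Max K) = K"
proof (rule chain_eqI[OF inc_tree_restrict_chain restrict_chain_chain_subset_verts])
  show "Max K \<in> K" "\<forall>x\<in>K. x \<le> Max K"
    using Max_in[OF restrict_chain_finite K_ne] Max_ge[OF restrict_chain_finite] by auto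
  show "root R \<in> K"
    using root_restrict_chain Min_in[OF restrict_chain_finite K_ne] by simp
  show "consecutive_pairs K \<subseteq> edges R" by (simp add: edges_restrict_chain)
qed

lemma offchain_edges_restrict_chain:
  "offchain_edges R (Max K) = (\<Union>a\<in>K. edges (decomp_comp T v a))"
proof -
  have "(x, y) \<in> edges (decomp_comp T v a) \<Longrightarrow> y \<notin> K" for x y a
    using edges_decomp_compD[of x y T v a] K_chain by blast
  then show ?thesis
    unfolding offchain_edges_def chain_restrict_chain edges_restrict_chain
    by (auto dest: consecutive_pairsD)
qed

lemma decomp_comp_restrict_chain: "a \<in> K \<Longrightarrow> decomp_comp R (Max K) a = decomp_comp T v a"
  by (rule decomp_comp_eqI) (use offchain_edges_restrict_chain edges_decomp_comp_subset in blast)+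

lemma ancestor_restrict_chain:
  assumes "i \<in> verts R" "j \<in> verts R" "ancestor T i j"
  shows "ancestor R i j"
  using assms unfolding ancestor_def
proof (induction j rule: less_induct)
  case (less j)
  obtain u where u: "(i, u) \<in> (edges T)\<^sup>*" "(u, j) \<in> edges T"
    using tranclD2[OF less.prems(3)] by blast
  have ij: "i < j" using inc_tree_trancl_less[OF it less.prems(3)] .
  show ?case
  proof (cases "j \<in> chain T v")
    case True
    then have "i \<in> chain T v"
      using chain_ancestor_closed[OF it trancl_into_rtrancl[OF less.prems(3)]] by blast
    then have "i \<in> K" "j \<in> K" using verts_restrict_chain_inter_chain less.prems True by blast+
    then have "(i, j) \<in> (edges R)\<^sup>*"
      using chain_rtrancl[OF inc_tree_restrict_chain, of i "Max K" j] chain_restrict_chain ij by simp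
    with ij show ?thesis by (metis less_irrefl rtranclD)
  next
    case False
    then have uO: "(u, j) \<in> offchain_edges T v" using u by (simp add: offchain_edges_def)
    obtain a where a: "a \<in> K" "(a, j) \<in> (offchain_edges T v)\<^sup>*"
      using less.prems(2) by (auto simp: verts_restrict_chain)
    have "j \<noteq> a" using a False K_chain by blast
    then obtain u' where u': "(a, u') \<in> (offchain_edges T v)\<^sup>*" "(u', j) \<in> offchain_edges T v"
      using a(2) by (metis rtranclE)
    have "u' = u" using inc_tree_father_unique[OF it] u'(2) u(2) offchain_edges_subset by blast
    with u' have ua: "(a, u) \<in> (offchain_edges T v)\<^sup>*" by simp
    with uO a have uR: "(u, j) \<in> edges R"
      by (auto simp: edges_decomp_comp edges_restrict_chain)
    have "u \<in> verts R" using a(1) ua by (auto simp: verts_restrict_chain)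
    show ?thesis
    proof (cases "i = u")
      case False
      then have "(i, u) \<in> (edges T)\<^sup>+" using u(1) by (metis rtranclD)
      then have "(i, u) \<in> (edges R)\<^sup>+"
        using less.IH inc_tree_edgeD[OF it u(2)] less.prems(1) \<open>u \<in> verts R\<close> by blast
      from this uR show ?thesis by (rule trancl_into_trancl)
    qed (use uR in blast)
  qed
qed

end

section \<open>Splicing\<close>

lemma restrict_chain_cong:
  assumes "\<And>a. a \<in> K \<Longrightarrow> decomp_comp T v a = decomp_comp T' v' a"
  shows "restrict_chain T v K = restrict_chain T' v' K"
  using assms by (simp add: restrict_chain_def)

lemma restrict_chain_chain:
  assumes "inc_tree T" "v \<in> verts T"
  shows "restrict_chain T v (chain T v) = T"
  using verts_eq_decomposition[OF assms] edges_eq_decomposition[OF assms]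
  by (intro tree_eqI) (simp_all add: restrict_chain_def)

lemma spl_restrict_chain:
  assumes it: "inc_tree T" and v: "v \<in> verts T"
    and K: "K1 \<union> K2 = chain T v" "v \<in> K1" "K2 \<noteq> {}"
  shows "spl (restrict_chain T v K1) v (restrict_chain T v K2) (Max K2) = T"
proof -
  let ?R1 = "restrict_chain T v K1" and ?R2 = "restrict_chain T v K2"
  have K1: "K1 \<subseteq> chain T v" "K1 \<noteq> {}" and K2: "K2 \<subseteq> chain T v" using K by auto
  have "Max K1 = v"
    using K chain_le[OF it] chain_finite[OF it] by (intro Max_eqI) (auto intro: finite_subset)
  then have ch1: "chain ?R1 v = K1" and dc1: "\<And>a. a \<in> K1 \<Longrightarrow> decomp_comp ?R1 v a = decomp_comp T v a"
    using chain_restrict_chain[OF it v K1] decomp_comp_restrict_chain[OF it v K1] by simp_all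
  have ch2: "chain ?R2 (Max K2) = K2"
    and dc2: "\<And>a. a \<in> K2 \<Longrightarrow> decomp_comp ?R2 (Max K2) a = decomp_comp T v a"
    using chain_restrict_chain[OF it v K2 K(3)] decomp_comp_restrict_chain[OF it v K2 K(3)] by simp_all
  show ?thesis
  proof (rule tree_eqI)
    show "verts (spl ?R1 v ?R2 (Max K2)) = verts T"
      unfolding spl_verts verts_eq_decomposition[OF it v] K(1)[symmetric]
      by (auto simp: restrict_chain_def)
    have "edges (spl ?R1 v ?R2 (Max K2)) = consecutive_pairs (chain T v)
        \<union> (\<Union>a\<in>K1. edges (decomp_comp T v a)) \<union> (\<Union>a\<in>K2. edges (decomp_comp T v a))"
      unfolding spl_edges ch1 ch2 K(1) using dc1 dc2 by simp
    also have "\<dots> = edges T"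
      unfolding edges_eq_decomposition[OF it v] K(1)[symmetric] by blast
    finally show "edges (spl ?R1 v ?R2 (Max K2)) = edges T" .
  qed
qed

context
  fixes T1 T2 :: tree and v1 v2 :: nat
  assumes it1: "inc_tree T1" and it2: "inc_tree T2" and disj: "verts T1 \<inter> verts T2 = {}"
    and v1: "v1 \<in> verts T1" and v2: "v2 \<in> verts T2" and v2_less: "v2 < v1"
    and it: "inc_tree (spl T1 v1 T2 v2)"
begin

abbreviation (input) S :: tree where "S \<equiv> spl T1 v1 T2 v2"

lemma chain_spl: "chain S v1 = chain T1 v1 \<union> chain T2 v2"
proof (rule chain_eqI[OF it])
  show "chain T1 v1 \<union> chain T2 v2 \<subseteq> verts S"
    using chain_subset_verts[of T1 v1] chain_subset_verts[of T2 v2] by (auto simp: spl_verts)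
  show "v1 \<in> chain T1 v1 \<union> chain T2 v2" using chain_self[OF v1] by blast
  show "\<forall>x\<in>chain T1 v1 \<union> chain T2 v2. x \<le> v1"
    using chain_le[OF it1, of _ v1] chain_le[OF it2, of _ v2] v2_less by fastforce
  have "root S = min (root T1) (root T2)"
    using Min_Un[OF inc_tree_finite[OF it1] _ inc_tree_finite[OF it2]] v1 v2
    by (auto simp: root_def spl_verts)
  then show "root S \<in> chain T1 v1 \<union> chain T2 v2"
    using root_in_chain[OF it1 v1] root_in_chain[OF it2 v2] by (simp add: min_def)
  show "consecutive_pairs (chain T1 v1 \<union> chain T2 v2) \<subseteq> edges S"
    unfolding spl_edges by blast
qed

lemma offchain_edges_spl:
  "offchain_edges S v1 =
     (\<Union>a\<in>chain T1 v1. edges (decomp_comp T1 v1 a)) \<union> (\<Union>a\<in>chain T2 v2. edges (decomp_comp T2 v2 a))"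
proof -
  have "y \<notin> chain T1 v1 \<union> chain T2 v2" if "(x, y) \<in> edges (decomp_comp T1 v1 a)" for x y a
    using edges_decomp_compD[OF that] inc_tree_edgeD[OF it1] chain_subset_verts[of T2 v2] disj
    by blast
  moreover have "y \<notin> chain T1 v1 \<union> chain T2 v2" if "(x, y) \<in> edges (decomp_comp T2 v2 a)" for x y a
    using edges_decomp_compD[OF that] inc_tree_edgeD[OF it2] chain_subset_verts[of T1 v1] disj
    by blast
  ultimately show ?thesis
    unfolding offchain_edges_def chain_spl spl_edges by (auto dest: consecutive_pairsD)
qed

lemma decomp_comp_spl1: "a \<in> chain T1 v1 \<Longrightarrow> decomp_comp S v1 a = decomp_comp T1 v1 a"
proof (rule decomp_comp_eqI)
  assume a: "a \<in> chain T1 v1"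
  then show "edges (decomp_comp T1 v1 a) \<subseteq> offchain_edges S v1"
    using offchain_edges_spl by blast
  fix x y assume x: "(a, x) \<in> (offchain_edges T1 v1)\<^sup>*" and xy: "(x, y) \<in> offchain_edges S v1"
  have "x \<in> verts T1"
    using offchain_rtrancl_verts[OF it1 _ x] a chain_subset_verts by blast
  then have "(x, y) \<notin> edges (decomp_comp T2 v2 b)" for b
    using edges_decomp_compD[of x y T2 v2 b] inc_tree_edgeD[OF it2] disj by blast
  then show "(x, y) \<in> offchain_edges T1 v1"
    using xy offchain_edges_spl edges_decomp_comp_subset by blast
qed

lemma decomp_comp_spl2: "a \<in> chain T2 v2 \<Longrightarrow> decomp_comp S v1 a = decomp_comp T2 v2 a"
proof (rule decomp_comp_eqI)
  assume a: "a \<in> chain T2 v2"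
  then show "edges (decomp_comp T2 v2 a) \<subseteq> offchain_edges S v1"
    using offchain_edges_spl by blast
  fix x y assume x: "(a, x) \<in> (offchain_edges T2 v2)\<^sup>*" and xy: "(x, y) \<in> offchain_edges S v1"
  have "x \<in> verts T2"
    using offchain_rtrancl_verts[OF it2 _ x] a chain_subset_verts by blast
  then have "(x, y) \<notin> edges (decomp_comp T1 v1 b)" for b
    using edges_decomp_compD[of x y T1 v1 b] inc_tree_edgeD[OF it1] disj by blast
  then show "(x, y) \<in> offchain_edges T2 v2"
    using xy offchain_edges_spl edges_decomp_comp_subset by blast
qed

lemma restrict_chain_spl1: "restrict_chain S v1 (chain T1 v1) = T1"
  using restrict_chain_cong[of "chain T1 v1" S v1 T1 v1] decomp_comp_spl1
    restrict_chain_chain[OF it1 v1] by simp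

lemma restrict_chain_spl2: "restrict_chain S v1 (chain T2 v2) = T2"
  using restrict_chain_cong[of "chain T2 v2" S v1 T2 v2] decomp_comp_spl2
    restrict_chain_chain[OF it2 v2] by simp

end

section \<open>Splitting a \<open>\<pi>\<close>-increasing tree\<close>

lemma union_of_blocksE:
  assumes "union_of_blocks P V" "x \<in> V"
  obtains B where "B \<in> P" "x \<in> B" "B \<subseteq> V"
  using assms unfolding union_of_blocks_def by blast

lemma block_subset_iff:
  assumes disj: "disjoint P" and U: "union_of_blocks P V" and B: "B \<in> P" "y \<in> B"
  shows "B \<subseteq> V \<longleftrightarrow> y \<in> V"
proof
  assume "y \<in> V"
  then obtain B' where "B' \<in> P" "y \<in> B'" "B' \<subseteq> V" by (rule union_of_blocksE[OF U])
  moreover from this have "B' = B" using disjointD[OF disj _ B(1)] B(2) by blast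
  ultimately show "B \<subseteq> V" by simp
qed (use B in blast)

lemma union_of_blocks_diff:
  assumes disj: "disjoint P" and "union_of_blocks P V" and W: "union_of_blocks P W"
  shows "union_of_blocks P (V - W)"
proof -
  obtain Q where Q: "Q \<subseteq> P" "V = \<Union>Q" using assms(2) unfolding union_of_blocks_def by blast
  have "V - W = \<Union>{B\<in>Q. \<not> B \<subseteq> W}"
  proof (intro equalityI subsetI)
    fix x assume "x \<in> V - W"
    with Q(2) show "x \<in> \<Union>{B\<in>Q. \<not> B \<subseteq> W}" by blast
  next
    fix x assume "x \<in> \<Union>{B\<in>Q. \<not> B \<subseteq> W}"
    then obtain B where "B \<in> Q" "x \<in> B" "\<not> B \<subseteq> W" by blast
    with Q block_subset_iff[OF disj W, of B x] show "x \<in> V - W" by blast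
  qed
  moreover have "{B\<in>Q. \<not> B \<subseteq> W} \<subseteq> P" using Q(1) by blast
  ultimately show ?thesis unfolding union_of_blocks_def by blast
qed

lemma pi_inc_tree_restrict_chain:
  assumes pT: "pi_inc_tree P T" and v: "v \<in> verts T" and K: "K \<subseteq> chain T v" "K \<noteq> {}"
    and U: "union_of_blocks P (verts (restrict_chain T v K))"
  shows "pi_inc_tree P (restrict_chain T v K)"
proof -
  have it: "inc_tree T" using pT by (simp add: pi_inc_tree_def)
  show ?thesis
    unfolding pi_inc_tree_def
  proof (intro conjI ballI impI inc_tree_restrict_chain[OF it v K] U)
    fix B i j assume "B \<in> P" "B \<subseteq> verts (restrict_chain T v K)" "i \<in> B" "j \<in> B" "i < j"
    moreover from this have "ancestor T i j"
      using pT verts_restrict_chain_subset[OF it v K] unfolding pi_inc_tree_def by blast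
    ultimately show "ancestor (restrict_chain T v K) i j"
      using ancestor_restrict_chain[OF it v K] by blast
  qed
qed

definition decomposition_respects :: "tree \<Rightarrow> nat \<Rightarrow> nat set \<Rightarrow> bool" where
  "decomposition_respects T v V \<longleftrightarrow>
     (\<forall>a\<in>chain T v. \<forall>x\<in>verts (decomp_comp T v a). x \<in> V \<longleftrightarrow> a \<in> V)"

lemma decomposition_respectsD:
  "decomposition_respects T v V \<Longrightarrow> a \<in> chain T v \<Longrightarrow> (a, x) \<in> (offchain_edges T v)\<^sup>* \<Longrightarrow>
    x \<in> V \<longleftrightarrow> a \<in> V"
  unfolding decomposition_respects_def verts_decomp_comp by blast

lemma verts_restrict_chain_respects:
  assumes it: "inc_tree T" and v: "v \<in> verts T" and resp: "decomposition_respects T v V"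
  shows "verts (restrict_chain T v (chain T v \<inter> V)) = verts T \<inter> V"
proof -
  have "(\<exists>a\<in>chain T v \<inter> V. (a, x) \<in> (offchain_edges T v)\<^sup>*) \<longleftrightarrow> x \<in> verts T \<and> x \<in> V" for x
  proof
    assume "\<exists>a\<in>chain T v \<inter> V. (a, x) \<in> (offchain_edges T v)\<^sup>*"
    then obtain a where "a \<in> chain T v" "a \<in> V" "(a, x) \<in> (offchain_edges T v)\<^sup>*" by blast
    then show "x \<in> verts T \<and> x \<in> V"
      using offchain_rtrancl_verts[OF it] chain_subset_verts[of T v] decomposition_respectsD[OF resp]
      by blast
  next
    assume x: "x \<in> verts T \<and> x \<in> V"
    then obtain a where "a \<in> chain T v" "(a, x) \<in> (offchain_edges T v)\<^sup>*"
      using ex_chain_root_of_component[OF it v] by blast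
    with x show "\<exists>a\<in>chain T v \<inter> V. (a, x) \<in> (offchain_edges T v)\<^sup>*"
      using decomposition_respectsD[OF resp] by blast
  qed
  then show ?thesis by (simp add: verts_restrict_chain set_eq_iff)
qed

definition splice_factors ::
    "nat set set \<Rightarrow> tree \<Rightarrow> nat set \<Rightarrow> nat \<Rightarrow> tree \<Rightarrow> tree \<Rightarrow> nat \<Rightarrow> bool" where
  "splice_factors P T V1 v1 T1 T2 v2 \<longleftrightarrow> pi_inc_tree P T1 \<and> pi_inc_tree P T2 \<and>
     verts T1 = V1 \<and> verts T2 = verts T - V1 \<and> v2 \<in> verts T2 \<and> v2 < v1 \<and> T = spl T1 v1 T2 v2"

lemma splice_factors_unique:
  assumes it: "inc_tree T" and v1: "v1 \<in> V1" and S: "splice_factors P T V1 v1 T1 T2 v2"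
  shows "decomposition_respects T v1 V1 \<and> T1 = restrict_chain T v1 (chain T v1 \<inter> V1)
    \<and> T2 = restrict_chain T v1 (chain T v1 - V1) \<and> v2 = Max (chain T v1 - V1)"
proof -
  have it1: "inc_tree T1" and it2: "inc_tree T2" and vT1: "verts T1 = V1"
    and vT2: "verts T2 = verts T - V1" and v2: "v2 \<in> verts T2" and lt: "v2 < v1"
    and T: "T = spl T1 v1 T2 v2"
    using S unfolding splice_factors_def pi_inc_tree_def by blast+
  have disj: "verts T1 \<inter> verts T2 = {}" using vT1 vT2 by blast
  have v1': "v1 \<in> verts T1" using v1 vT1 by simp
  note spl_facts = chain_spl decomp_comp_spl1 decomp_comp_spl2 restrict_chain_spl1 restrict_chain_spl2
  note spl_facts = spl_facts[OF it1 it2 disj v1' v2 lt, folded T, OF it]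
  have C1: "chain T1 v1 \<subseteq> V1" and C2: "chain T2 v2 \<inter> V1 = {}"
    using chain_subset_verts[of T1 v1] chain_subset_verts[of T2 v2] vT1 vT2 by blast+
  have K1: "chain T v1 \<inter> V1 = chain T1 v1" and K2: "chain T v1 - V1 = chain T2 v2"
    unfolding spl_facts(1) using C1 C2 by blast+
  have "decomposition_respects T v1 V1"
    unfolding decomposition_respects_def spl_facts(1)
  proof (intro ballI)
    fix a x assume a: "a \<in> chain T1 v1 \<union> chain T2 v2" and x: "x \<in> verts (decomp_comp T v1 a)"
    show "x \<in> V1 \<longleftrightarrow> a \<in> V1"
    proof (cases "a \<in> chain T1 v1")
      case True
      then have "x \<in> verts (decomp_comp T1 v1 a)" using x spl_facts(2) by simp
      then have "x \<in> verts T1" using verts_eq_decomposition[OF it1 v1'] True by blast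
      with True C1 vT1 show ?thesis by blast
    next
      case False
      with a have a2: "a \<in> chain T2 v2" by blast
      then have "x \<in> verts (decomp_comp T2 v2 a)" using x spl_facts(3) by simp
      then have "x \<in> verts T2" using verts_eq_decomposition[OF it2 v2] a2 by blast
      with a2 C2 vT2 show ?thesis by blast
    qed
  qed
  moreover have "Max (chain T2 v2) = v2" using Max_chain[OF it2 v2] .
  ultimately show ?thesis using spl_facts(4,5) K1 K2 by simp
qed

lemma splice_factors_restrict_chain:
  assumes disj: "disjoint P" and pT: "pi_inc_tree P T" and V1: "V1 \<subset> verts T"
    and U: "union_of_blocks P V1" and v1: "v1 \<in> V1" and resp: "decomposition_respects T v1 V1"
  shows "splice_factors P T V1 v1 (restrict_chain T v1 (chain T v1 \<inter> V1))
    (restrict_chain T v1 (chain T v1 - V1)) (Max (chain T v1 - V1))"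
proof -
  have it: "inc_tree T" and UT: "union_of_blocks P (verts T)"
    using pT by (simp_all add: pi_inc_tree_def)
  have v1T: "v1 \<in> verts T" using v1 V1 by blast
  let ?K1 = "chain T v1 \<inter> V1" and ?K2 = "chain T v1 - V1"
  have resp': "decomposition_respects T v1 (- V1)"
    using resp by (simp add: decomposition_respects_def)
  have vR1: "verts (restrict_chain T v1 ?K1) = V1"
    using verts_restrict_chain_respects[OF it v1T resp] V1 by blast
  have vR2: "verts (restrict_chain T v1 ?K2) = verts T - V1"
    using verts_restrict_chain_respects[OF it v1T resp'] by (simp add: Diff_eq)
  have "?K2 \<noteq> {}" using vR2 V1 by (auto simp: verts_restrict_chain)
  have "?K1 \<noteq> {}" using chain_self[OF v1T] v1 by blast
  have "Max ?K2 \<in> ?K2" "Max ?K2 \<le> v1"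
    using Max_in[OF _ \<open>?K2 \<noteq> {}\<close>] chain_finite[OF it] chain_le[OF it] by auto
  moreover have "Max ?K2 \<noteq> v1" using \<open>Max ?K2 \<in> ?K2\<close> v1 by auto
  moreover have "pi_inc_tree P (restrict_chain T v1 ?K1)"
    using pi_inc_tree_restrict_chain[OF pT v1T _ \<open>?K1 \<noteq> {}\<close>] vR1 U by simp
  moreover have "pi_inc_tree P (restrict_chain T v1 ?K2)"
    using pi_inc_tree_restrict_chain[OF pT v1T _ \<open>?K2 \<noteq> {}\<close>] vR2
      union_of_blocks_diff[OF disj UT U] by simp
  moreover have "T = spl (restrict_chain T v1 ?K1) v1 (restrict_chain T v1 ?K2) (Max ?K2)"
  proof -
    have "?K1 \<union> ?K2 = chain T v1" "v1 \<in> ?K1" using chain_self[OF v1T] v1 by blast+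
    from spl_restrict_chain[OF it v1T this \<open>?K2 \<noteq> {}\<close>] show ?thesis by simp
  qed
  ultimately show ?thesis
    unfolding splice_factors_def using vR1 vR2 chain_subset_verts[of T v1] by auto
qed

section \<open>The dependence graph\<close>

lemma std_partition_disjoint: "std_partition r P \<Longrightarrow> disjoint P"
  unfolding std_partition_def by (metis partition_onD2)

lemma std_partition_block:
  assumes "std_partition r P" "B \<in> P"
  shows "finite B" "B \<noteq> {}"
proof -
  have p: "partition_on {1..r} P" using assms(1) unfolding std_partition_def by blast
  have "B \<subseteq> {1..r}" using partition_onD1[OF p] assms(2) by blast
  then show "finite B" by (rule finite_subset) simp
  show "B \<noteq> {}" using partition_onD3[OF p] assms(2) by blast
qed

lemma dep_edgesD:
  assumes "(B, B') \<in> dep_edges P T v"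
  obtains a where "a \<in> chain T v" "Max B \<in> verts (decomp_comp T v a)" "a \<in> B'"
    "B \<in> dep_nodes P T" "B' \<in> dep_nodes P T"
  using assms that unfolding dep_edges_def by auto

lemma dep_component_closed:
  assumes K: "K \<in> dep_components P T v" and e: "(B, B') \<in> dep_edges P T v"
  shows "B \<in> K \<longleftrightarrow> B' \<in> K"
proof -
  let ?S = "dep_edges P T v \<union> (dep_edges P T v)\<inverse>"
  obtain B0 where K_def: "K = {B' \<in> dep_nodes P T. (B0, B') \<in> ?S\<^sup>*}"
    using K unfolding dep_components_def by blast
  have "B \<in> dep_nodes P T" "B' \<in> dep_nodes P T" using e unfolding dep_edges_def by auto
  moreover have "(B, B') \<in> ?S" "(B', B) \<in> ?S" using e by blast+
  ultimately show ?thesis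
    unfolding K_def using rtrancl.rtrancl_into_rtrancl[of B0 _ ?S] by blast
qed

lemma rtrancl_Un_converse_invariant:
  assumes "\<And>x y. (x, y) \<in> E \<Longrightarrow> f x = f y" and "(x, y) \<in> (E \<union> E\<inverse>)\<^sup>*"
  shows "f x = f y"
  using assms(2)
proof (induction rule: rtrancl_induct)
  case (step y z)
  then have "f y = f z" using assms(1)[of y z] assms(1)[of z y] by (metis UnE converse_iff)
  with step.IH show ?case by simp
qed simp

text \<open>The key use of the \<open>\<pi>\<close>-increasing property: the block \<open>B\<close> of a vertex \<open>x\<close> hanging
  off the chain at \<open>a\<close> has its maximum below \<open>x\<close>, hence in the same component, so \<open>B\<close> depends
  on the block of \<open>a\<close>.\<close>

lemma dep_edge_of_component:
  assumes sp: "std_partition r P" and pT: "pi_inc_tree P T"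
    and a: "a \<in> chain T v" and ax: "(a, x) \<in> (offchain_edges T v)\<^sup>*" and "x \<noteq> a"
    and B: "B \<in> P" "x \<in> B" "B \<subseteq> verts T" and Ba: "Ba \<in> P" "a \<in> Ba" "Ba \<subseteq> verts T"
  shows "(B, Ba) \<in> dep_edges P T v"
proof -
  have it: "inc_tree T" using pT by (simp add: pi_inc_tree_def)
  have x_off: "x \<notin> chain T v" using offchain_rtrancl_notin_chain[OF ax \<open>x \<noteq> a\<close>] .
  have MB: "Max B \<in> B" "x \<le> Max B"
    using Max_in Max_ge std_partition_block[OF sp B(1)] B(2) by auto
  have "(x, Max B) \<in> (edges T)\<^sup>*"
  proof (cases "x = Max B")
    case False
    with MB have "ancestor T x (Max B)"
      using pT B unfolding pi_inc_tree_def by auto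
    then show ?thesis unfolding ancestor_def by (rule trancl_into_rtrancl)
  qed simp
  from descendant_offchain[OF it x_off this]
  have "(a, Max B) \<in> (offchain_edges T v)\<^sup>*" "Max B \<notin> chain T v"
    using ax by (auto intro: rtrancl_trans)
  moreover from this have "Max B \<noteq> a" using a by blast
  ultimately show ?thesis
    using a B Ba unfolding dep_edges_def dep_nodes_def by (auto simp: verts_decomp_comp)
qed

context
  fixes r :: nat and P :: "nat set set" and T :: tree and v :: nat and V :: "nat set"
  assumes sp: "std_partition r P" and pT: "pi_inc_tree P T" and v: "v \<in> verts T"
    and U: "union_of_blocks P V" and V: "V \<subseteq> verts T"
begin

lemma dep_edge_respects:
  assumes resp: "decomposition_respects T v V" and e: "(B, B') \<in> dep_edges P T v"
  shows "B \<subseteq> V \<longleftrightarrow> B' \<subseteq> V"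
proof -
  obtain a where a: "a \<in> chain T v" "Max B \<in> verts (decomp_comp T v a)" "a \<in> B'"
    and B: "B \<in> P" and B': "B' \<in> P"
    using dep_edgesD[OF e] unfolding dep_nodes_def by blast
  have "Max B \<in> B" using std_partition_block[OF sp B] by simp
  then have "B \<subseteq> V \<longleftrightarrow> Max B \<in> V"
    using block_subset_iff[OF std_partition_disjoint[OF sp] U B] by blast
  also have "\<dots> \<longleftrightarrow> a \<in> V" using resp a unfolding decomposition_respects_def by blast
  also have "\<dots> \<longleftrightarrow> B' \<subseteq> V"
    using block_subset_iff[OF std_partition_disjoint[OF sp] U B' a(3)] by blast
  finally show ?thesis .
qed

lemma dep_components_Union_if_respects:
  assumes resp: "decomposition_respects T v V"
  shows "\<exists>\<C>\<subseteq>dep_components P T v. V = \<Union>(\<Union>\<C>)"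
proof -
  let ?S = "dep_edges P T v \<union> (dep_edges P T v)\<inverse>"
  let ?C = "{K \<in> dep_components P T v. \<forall>B\<in>K. B \<subseteq> V}"
  have "V \<subseteq> \<Union>(\<Union>?C)"
  proof
    fix x assume "x \<in> V"
    then obtain B where B: "B \<in> P" "x \<in> B" "B \<subseteq> V" by (rule union_of_blocksE[OF U])
    let ?K = "{B' \<in> dep_nodes P T. (B, B') \<in> ?S\<^sup>*}"
    have BN: "B \<in> dep_nodes P T" using B V by (auto simp: dep_nodes_def)
    then have "?K \<in> dep_components P T v" unfolding dep_components_def by blast
    moreover have "B' \<subseteq> V" if "B' \<in> ?K" for B'
    proof -
      from that have "(B, B') \<in> ?S\<^sup>*" by blast
      from rtrancl_Un_converse_invariant[of _ "\<lambda>B. B \<subseteq> V", OF dep_edge_respects[OF resp] this]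
      show ?thesis using B(3) by simp
    qed
    ultimately have "?K \<in> ?C" by blast
    moreover have "B \<in> ?K" using BN by simp
    ultimately show "x \<in> \<Union>(\<Union>?C)" using B(2) by blast
  qed
  then have "V = \<Union>(\<Union>?C)" by blast
  moreover have "?C \<subseteq> dep_components P T v" by blast
  ultimately show ?thesis by blast
qed

lemma respects_if_dep_components_Union:
  assumes C: "\<C> \<subseteq> dep_components P T v" "V = \<Union>(\<Union>\<C>)"
  shows "decomposition_respects T v V"
proof -
  have UT: "union_of_blocks P (verts T)" using pT by (simp add: pi_inc_tree_def)
  have in_V: "y \<in> V \<longleftrightarrow> B \<in> \<Union>\<C>" if B: "B \<in> dep_nodes P T" "y \<in> B" for B y
  proof
    assume "y \<in> V"
    then obtain K B' where K: "K \<in> \<C>" "B' \<in> K" "y \<in> B'" using C(2) by blast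
    then have "B' \<in> dep_nodes P T" using C(1) unfolding dep_components_def by blast
    then have "B' = B"
      using disjointD[OF std_partition_disjoint[OF sp]] K(3) B unfolding dep_nodes_def by blast
    with K show "B \<in> \<Union>\<C>" by blast
  qed (use C(2) B(2) in blast)
  show ?thesis
    unfolding decomposition_respects_def verts_decomp_comp
  proof (intro ballI, clarify)
    fix a x assume a: "a \<in> chain T v" and ax: "(a, x) \<in> (offchain_edges T v)\<^sup>*"
    show "x \<in> V \<longleftrightarrow> a \<in> V"
    proof (cases "x = a")
      case False
      have aT: "a \<in> verts T" using a chain_subset_verts[of T v] by blast
      have xT: "x \<in> verts T"
        using offchain_rtrancl_verts[OF _ aT ax] pT by (simp add: pi_inc_tree_def)
      obtain B where B: "B \<in> P" "x \<in> B" "B \<subseteq> verts T" by (rule union_of_blocksE[OF UT xT])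
      obtain Ba where Ba: "Ba \<in> P" "a \<in> Ba" "Ba \<subseteq> verts T" by (rule union_of_blocksE[OF UT aT])
      have e: "(B, Ba) \<in> dep_edges P T v"
        using dep_edge_of_component[OF sp pT a ax False B Ba] .
      have "B \<in> \<Union>\<C> \<longleftrightarrow> Ba \<in> \<Union>\<C>"
        using dep_component_closed[OF _ e] C(1) by blast
      moreover have "B \<in> dep_nodes P T" "Ba \<in> dep_nodes P T"
        using B Ba by (auto simp: dep_nodes_def)
      ultimately show ?thesis using in_V B(2) Ba(2) by blast
    qed simp
  qed
qed

lemma decomposition_respects_iff_dep_components:
  "decomposition_respects T v V \<longleftrightarrow> (\<exists>\<C>\<subseteq>dep_components P T v. V = \<Union>(\<Union>\<C>))"
  using dep_components_Union_if_respects respects_if_dep_components_Union by blast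

end

theorem lemma3p9:
  fixes r :: nat and P :: "nat set set" and T :: tree and V1 :: "nat set" and v1 :: nat
  assumes "std_partition r P"
    and "pi_inc_tree P T"
    and "V1 \<subset> verts T" and "V1 \<noteq> {}" and "union_of_blocks P V1"
    and "v1 \<in> V1"
  shows "((\<exists>T1 T2 v2. pi_inc_tree P T1 \<and> pi_inc_tree P T2 \<and>
             verts T1 = V1 \<and> verts T2 = verts T - V1 \<and> v2 \<in> verts T2 \<and> v2 < v1 \<and>
             T = spl T1 v1 T2 v2)
          \<longleftrightarrow> (\<exists>\<C>\<subseteq>dep_components P T v1. V1 = \<Union>(\<Union>\<C>)))
       \<and> ((\<exists>\<C>\<subseteq>dep_components P T v1. V1 = \<Union>(\<Union>\<C>)) \<longrightarrow>
          (\<exists>!(T1, T2, v2). pi_inc_tree P T1 \<and> pi_inc_tree P T2 \<and>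
             verts T1 = V1 \<and> verts T2 = verts T - V1 \<and> v2 \<in> verts T2 \<and> v2 < v1 \<and>
             T = spl T1 v1 T2 v2))"
proof -
  note sp = assms(1) and pT = assms(2) and V1 = assms(3) and U = assms(5) and v1 = assms(6)
  have it: "inc_tree T" using pT by (simp add: pi_inc_tree_def)
  have v1T: "v1 \<in> verts T" using V1 v1 by blast
  let ?T1 = "restrict_chain T v1 (chain T v1 \<inter> V1)" and ?T2 = "restrict_chain T v1 (chain T v1 - V1)"
    and ?v2 = "Max (chain T v1 - V1)"
  have respects_iff: "decomposition_respects T v1 V1 \<longleftrightarrow> (\<exists>\<C>\<subseteq>dep_components P T v1. V1 = \<Union>(\<Union>\<C>))"
    using decomposition_respects_iff_dep_components[OF sp pT v1T U psubset_imp_subset[OF V1]] .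
  have exists: "splice_factors P T V1 v1 ?T1 ?T2 ?v2" if "decomposition_respects T v1 V1"
    using splice_factors_restrict_chain[OF std_partition_disjoint[OF sp] pT V1 U v1 that] .
  have unique: "decomposition_respects T v1 V1 \<and> (T1, T2, v2) = (?T1, ?T2, ?v2)"
    if "splice_factors P T V1 v1 T1 T2 v2" for T1 T2 v2
    using splice_factors_unique[OF it v1 that] by simp
  have "(\<exists>T1 T2 v2. splice_factors P T V1 v1 T1 T2 v2) \<longleftrightarrow> decomposition_respects T v1 V1"
  proof
    assume "\<exists>T1 T2 v2. splice_factors P T V1 v1 T1 T2 v2"
    then obtain T1 T2 v2 where "splice_factors P T V1 v1 T1 T2 v2" by blast
    then show "decomposition_respects T v1 V1" using unique by blast
  qed (use exists in blast)
  moreover have "\<exists>!(T1, T2, v2). splice_factors P T V1 v1 T1 T2 v2"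
    if "decomposition_respects T v1 V1"
  proof (rule ex1I[of _ "(?T1, ?T2, ?v2)"])
    fix w assume "case w of (T1, T2, v2) \<Rightarrow> splice_factors P T V1 v1 T1 T2 v2"
    then show "w = (?T1, ?T2, ?v2)" using unique by (cases w) auto
  qed (use exists[OF that] in simp)
  ultimately show ?thesis
    unfolding splice_factors_def respects_iff by blast
qed

end
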